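(* Let $P\subset\mathbb{R}^d$ be a finite dataset with $|P|=n$, let $s$ be the number of compute nodes, $t<s$, $\delta>0$, and let $A\in\{0,1\}^{s\times n}$ (columns indexed by the points of $P$) satisfy the straggler-resilience property with parameter $\delta$. For $i\in[s]$ let $P_i$ be the set of points of $P$ whose column has a $1$ in row $i$. Let $\mathcal{R}\subseteq[s]$ with $|\mathcal{R}|\ge s-t$ be the set of non-straggling nodes and $\mathbf{b}=(b_i)_{i\in\mathcal{R}}$ a corresponding non-negative recovery vector. For each $i\in\mathcal{R}$ let $Y_i$ be an optimal set of $k$ $k$-median centers for $P_i$, with weights $w_i(\mathbf{c})=|\mathrm{cluster}(\mathbf{c},P_i)|$ for $\mathbf{c}\in Y_i$. Let $Y=\bigcup_{i\in\mathcal{R}}Y_i$ with weight $w(\mathbf{c})=\sum_{i\in\mathcal{R}:\,\mathbf{c}\in Y_i}b_i w_i(\mathbf{c})$, and let $\widehat{C}$ be an optimal set of $k$ centers for the weighted $k$-median problem on $(Y,w)$. If $C^*$ is an optimal set of $k$-median centers for $P$, then $$\mathrm{cost}(P,\widehat{C})\le 3(1+\delta)\,\mathrm{cost}(P,C^* ).$$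
   Context: $d(\mathbf{x},C)=\min_{\mathbf{c}\in C}\|\mathbf{x}-\mathbf{c}\|_2$. The $k$-median cost is $\mathrm{cost}(Q,C)=\sum_{\mathbf{q}\in Q}d(\mathbf{q},C)$ and the weighted version is $\mathrm{cost}(Q,C,w)=\sum_{\mathbf{q}\in Q}w(\mathbf{q})d(\mathbf{q},C)$; optimal centers are minimizers over all sets of $k$ points in $\mathbb{R}^d$. $\mathrm{cluster}(\mathbf{c},P_i)$ is the set of points of $P_i$ whose closest center in $Y_i$ is $\mathbf{c}$ (ties broken arbitrarily so clusters partition $P_i$). Straggler-resilience property with parameter $\delta$: for every $\mathcal{R}\subseteq[s]$ with $|\mathcal{R}|\ge s-t$, letting $A_{\mathcal{R}}$ be the rows of $A$ indexed by $\mathcal{R}$, there is $\mathbf{b}\in\mathbb{R}^{|\mathcal{R}|}$ with non-negative entries (a recovery vector) such that $\mathbf{b}^TA_{\mathcal{R}}=(a_1,\ldots,a_n)$ with $1\le a_j\le1+\delta$ for all $j$. *)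

theory Defs
  imports "HOL-Analysis.Analysis"
begin

definition dist_to :: "'a::euclidean_space \<Rightarrow> 'a set \<Rightarrow> real" where
  "dist_to x C = Min ((\<lambda>c. norm (x - c)) ` C)"

definition kcost :: "'a::euclidean_space set \<Rightarrow> 'a set \<Rightarrow> real" where
  "kcost Q C = (\<Sum>q\<in>Q. dist_to q C)"

definition wkcost :: "'a::euclidean_space set \<Rightarrow> 'a set \<Rightarrow> ('a \<Rightarrow> real) \<Rightarrow> real" where
  "wkcost Q C w = (\<Sum>q\<in>Q. w q * dist_to q C)"

definition opt_kmedian :: "nat \<Rightarrow> 'a::euclidean_space set \<Rightarrow> 'a set \<Rightarrow> bool" where
  "opt_kmedian k Q C \<longleftrightarrow> finite C \<and> card C = k \<and>
     (\<forall>C'. finite C' \<and> card C' = k \<longrightarrow> kcost Q C \<le> kcost Q C')"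

definition opt_wkmedian :: "nat \<Rightarrow> 'a::euclidean_space set \<Rightarrow> ('a \<Rightarrow> real) \<Rightarrow> 'a set \<Rightarrow> bool" where
  "opt_wkmedian k Q w C \<longleftrightarrow> finite C \<and> card C = k \<and>
     (\<forall>C'. finite C' \<and> card C' = k \<longrightarrow> wkcost Q C w \<le> wkcost Q C' w)"

definition recovery_vector :: "(nat \<Rightarrow> 'a \<Rightarrow> real) \<Rightarrow> 'a set \<Rightarrow> real \<Rightarrow> nat set \<Rightarrow> (nat \<Rightarrow> real) \<Rightarrow> bool" where
  "recovery_vector A P \<delta> R b \<longleftrightarrow> (\<forall>i\<in>R. 0 \<le> b i) \<and>
     (\<forall>p\<in>P. 1 \<le> (\<Sum>i\<in>R. b i * A i p) \<and> (\<Sum>i\<in>R. b i * A i p) \<le> 1 + \<delta>)"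

definition straggler_resilient :: "(nat \<Rightarrow> 'a \<Rightarrow> real) \<Rightarrow> 'a set \<Rightarrow> nat \<Rightarrow> nat \<Rightarrow> real \<Rightarrow> bool" where
  "straggler_resilient A P s t \<delta> \<longleftrightarrow>
     (\<forall>R. R \<subseteq> {1..s} \<and> card R \<ge> s - t \<longrightarrow> (\<exists>b. recovery_vector A P \<delta> R b))"

text \<open>cluster(c, Q) w.r.t. a tie-breaking assignment sigma of points to their closest centers.\<close>
definition cluster :: "('a \<Rightarrow> 'a) \<Rightarrow> 'a \<Rightarrow> 'a set \<Rightarrow> 'a set" where
  "cluster \<sigma> c Q = {p\<in>Q. \<sigma> p = c}"

end

theory Submission
  imports Defs
begin

text \<open>Node i replaces each of its points p by its nearest center \<open>\<sigma>\<^sub>i p\<close>; moving the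
  points costs \<open>D\<^sub>i = cost(P\<^sub>i, Y\<^sub>i) \<le> cost(P\<^sub>i, C)\<close> for every k-set C. By the triangle
  inequality, the costs of \<open>P\<^sub>i\<close> and of the moved points differ by at most \<open>D\<^sub>i\<close>, and the
  weighted cost of the merged summary \<open>(Y, w)\<close> is exactly the b-weighted sum of the
  moved-point costs. Comparing Chat with Cstar on the summary therefore gives
  \<open>\<Sum> b\<^sub>i cost(P\<^sub>i, Chat) \<le> \<Sum> b\<^sub>i (2 D\<^sub>i + cost(P\<^sub>i, Cstar)) \<le> 3 \<Sum> b\<^sub>i cost(P\<^sub>i, Cstar)\<close>.
  Finally, since every entry of \<open>b\<^sup>T A\<^sub>R\<close> lies in \<open>[1, 1 + \<delta>]\<close>, the sum
  \<open>\<Sum> b\<^sub>i cost(P\<^sub>i, C)\<close> lies between \<open>cost(P, C)\<close> and \<open>(1 + \<delta>) cost(P, C)\<close>.\<close>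

lemma dist_to_nonneg: "finite C \<Longrightarrow> C \<noteq> {} \<Longrightarrow> 0 \<le> dist_to x C"
  unfolding dist_to_def by (simp add: Min_ge_iff)

lemma dist_to_le_norm: "finite C \<Longrightarrow> c \<in> C \<Longrightarrow> dist_to x C \<le> norm (x - c)"
  unfolding dist_to_def by (simp add: Min_le_iff)

lemma dist_to_triangle:
  assumes "finite C" "C \<noteq> {}"
  shows "dist_to x C \<le> norm (x - y) + dist_to y C"
proof -
  have "dist_to y C \<in> (\<lambda>c. norm (y - c)) ` C"
    unfolding dist_to_def using assms by (intro Min_in) auto
  then obtain c where c: "c \<in> C" "dist_to y C = norm (y - c)" by auto
  have "dist_to x C \<le> norm (x - c)" using dist_to_le_norm[OF assms(1) c(1)] .
  also have "\<dots> \<le> norm (x - y) + norm (y - c)" using norm_triangle_ineq[of "x - y" "y - c"] by simp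
  finally show ?thesis using c by simp
qed

lemma sum_dist_to_triangle:
  assumes "finite C" "C \<noteq> {}"
  shows "(\<Sum>p\<in>Q. dist_to (f p) C) \<le> (\<Sum>p\<in>Q. norm (f p - g p)) + (\<Sum>p\<in>Q. dist_to (g p) C)"
  unfolding sum.distrib[symmetric] by (intro sum_mono dist_to_triangle assms)

lemma sum_card_cluster:
  fixes f :: "'a \<Rightarrow> 'b::comm_semiring_1"
  assumes "finite Q" "finite Z" "\<sigma> ` Q \<subseteq> Z"
  shows "(\<Sum>c\<in>Z. of_nat (card (cluster \<sigma> c Q)) * f c) = (\<Sum>p\<in>Q. f (\<sigma> p))"
proof -
  have "of_nat (card (cluster \<sigma> c Q)) * f c = (\<Sum>p\<in>{p\<in>Q. \<sigma> p = c}. f (\<sigma> p))" for c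
    by (simp add: cluster_def)
  then show ?thesis
    using sum.group[OF assms, of "\<lambda>p. f (\<sigma> p)"] by simp
qed

lemma wkcost_cluster_weights:
  assumes "finite Q" "finite Z" "\<sigma> ` Q \<subseteq> Z"
  shows "wkcost Z C (\<lambda>c. real (card (cluster \<sigma> c Q))) = (\<Sum>p\<in>Q. dist_to (\<sigma> p) C)"
  unfolding wkcost_def by (rule sum_card_cluster[OF assms])

lemma wkcost_merged_weights:
  assumes "finite R" "\<And>i. i \<in> R \<Longrightarrow> finite (Y i)"
  shows "wkcost (\<Union>i\<in>R. Y i) C (\<lambda>c. \<Sum>i\<in>{i\<in>R. c \<in> Y i}. b i * W i c)
       = (\<Sum>i\<in>R. b i * wkcost (Y i) C (W i))"
proof -
  let ?U = "\<Union>i\<in>R. Y i"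
  have "wkcost ?U C (\<lambda>c. \<Sum>i\<in>{i\<in>R. c \<in> Y i}. b i * W i c)
      = (\<Sum>c\<in>?U. \<Sum>i\<in>{i\<in>R. c \<in> Y i}. b i * (W i c * dist_to c C))"
    unfolding wkcost_def by (simp add: sum_distrib_right mult.assoc)
  also have "\<dots> = (\<Sum>i\<in>R. \<Sum>c\<in>{c\<in>?U. c \<in> Y i}. b i * (W i c * dist_to c C))"
    using assms by (intro sum.swap_restrict) auto
  also have "\<dots> = (\<Sum>i\<in>R. b i * wkcost (Y i) C (W i))"
    unfolding wkcost_def sum_distrib_left by (intro sum.cong) auto
  finally show ?thesis .
qed

lemma wkcost_merged_cluster_weights:
  assumes "finite R" "\<And>i. i \<in> R \<Longrightarrow> finite (Q i)" "\<And>i. i \<in> R \<Longrightarrow> finite (Y i)"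
    and "\<And>i. i \<in> R \<Longrightarrow> \<sigma> i ` Q i \<subseteq> Y i"
  shows "wkcost (\<Union>i\<in>R. Y i) C (\<lambda>c. \<Sum>i\<in>{i\<in>R. c \<in> Y i}. b i * real (card (cluster (\<sigma> i) c (Q i))))
       = (\<Sum>i\<in>R. b i * (\<Sum>p\<in>Q i. dist_to (\<sigma> i p) C))"
proof -
  have "wkcost (Y i) C (\<lambda>c. real (card (cluster (\<sigma> i) c (Q i)))) = (\<Sum>p\<in>Q i. dist_to (\<sigma> i p) C)"
    if "i \<in> R" for i
    using assms(2-4)[OF that] by (rule wkcost_cluster_weights)
  then show ?thesis
    by (simp add: wkcost_merged_weights[OF assms(1,3)])
qed

lemma opt_merged_centers_3_approx:
  fixes Q Y :: "nat \<Rightarrow> 'a::euclidean_space set" and \<sigma> :: "nat \<Rightarrow> 'a \<Rightarrow> 'a"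
  assumes "finite R" "0 < k"
    and b_nonneg: "\<And>i. i \<in> R \<Longrightarrow> 0 \<le> b i"
    and Q_finite: "\<And>i. i \<in> R \<Longrightarrow> finite (Q i)"
    and Y_opt: "\<And>i. i \<in> R \<Longrightarrow> opt_kmedian k (Q i) (Y i)"
    and \<sigma>_nearest: "\<And>i p. i \<in> R \<Longrightarrow> p \<in> Q i \<Longrightarrow> \<sigma> i p \<in> Y i \<and> norm (p - \<sigma> i p) = dist_to p (Y i)"
    and Chat_opt: "opt_wkmedian k (\<Union>i\<in>R. Y i)
           (\<lambda>c. \<Sum>i\<in>{i\<in>R. c \<in> Y i}. b i * real (card (cluster (\<sigma> i) c (Q i)))) Chat"
    and "finite C" "card C = k"
  shows "(\<Sum>i\<in>R. b i * kcost (Q i) Chat) \<le> 3 * (\<Sum>i\<in>R. b i * kcost (Q i) C)"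
proof -
  define D where "D i = (\<Sum>p\<in>Q i. norm (p - \<sigma> i p))" for i
  define G where "G i C' = (\<Sum>p\<in>Q i. dist_to (\<sigma> i p) C')" for i C'
  let ?w = "\<lambda>c. \<Sum>i\<in>{i\<in>R. c \<in> Y i}. b i * real (card (cluster (\<sigma> i) c (Q i)))"
  have Y_finite: "finite (Y i)" if "i \<in> R" for i
    using Y_opt[OF that] unfolding opt_kmedian_def by blast
  have "finite Chat" "Chat \<noteq> {}" "C \<noteq> {}"
    using Chat_opt \<open>0 < k\<close> \<open>card C = k\<close> unfolding opt_wkmedian_def by auto
  have wkcost_eq: "wkcost (\<Union>i\<in>R. Y i) C' ?w = (\<Sum>i\<in>R. b i * G i C')" for C'
    unfolding G_def using Q_finite Y_finite \<sigma>_nearest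
    by (intro wkcost_merged_cluster_weights \<open>finite R\<close>) auto
  have D_eq: "D i = kcost (Q i) (Y i)" if "i \<in> R" for i
    unfolding D_def kcost_def using \<sigma>_nearest[OF that] by (intro sum.cong) auto
  have D_le: "D i \<le> kcost (Q i) C" if "i \<in> R" for i
    using Y_opt[OF that] \<open>finite C\<close> \<open>card C = k\<close> D_eq[OF that] unfolding opt_kmedian_def by auto
  have Chat_le: "kcost (Q i) Chat \<le> D i + G i Chat" for i
    unfolding kcost_def D_def G_def
    using sum_dist_to_triangle[OF \<open>finite Chat\<close> \<open>Chat \<noteq> {}\<close>, of id] by simp
  have G_le: "G i C \<le> D i + kcost (Q i) C" for i
    unfolding kcost_def D_def G_def
    using sum_dist_to_triangle[OF \<open>finite C\<close> \<open>C \<noteq> {}\<close>, of _ _ id] by (simp add: norm_minus_commute)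
  have "(\<Sum>i\<in>R. b i * kcost (Q i) Chat) \<le> (\<Sum>i\<in>R. b i * D i) + (\<Sum>i\<in>R. b i * G i Chat)"
    unfolding sum.distrib[symmetric] distrib_left[symmetric]
    using Chat_le b_nonneg by (intro sum_mono mult_left_mono) auto
  also have "(\<Sum>i\<in>R. b i * G i Chat) \<le> (\<Sum>i\<in>R. b i * G i C)"
    using Chat_opt \<open>finite C\<close> \<open>card C = k\<close> unfolding opt_wkmedian_def wkcost_eq by blast
  also have "(\<Sum>i\<in>R. b i * D i) + (\<Sum>i\<in>R. b i * G i C) \<le> (\<Sum>i\<in>R. 3 * (b i * kcost (Q i) C))"
    unfolding sum.distrib[symmetric]
  proof (intro sum_mono)
    fix i assume "i \<in> R"
    have "D i + G i C \<le> 3 * kcost (Q i) C" using D_le[OF \<open>i \<in> R\<close>] G_le[of i] by linarith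
    then show "b i * D i + b i * G i C \<le> 3 * (b i * kcost (Q i) C)"
      using b_nonneg[OF \<open>i \<in> R\<close>] mult_left_mono by (fastforce simp: algebra_simps)
  qed
  finally show ?thesis by (simp add: sum_distrib_left)
qed

lemma sum_recovery_weighted:
  fixes A :: "'i \<Rightarrow> 'a \<Rightarrow> 'b::comm_semiring_1"
  assumes "finite P" "\<And>i p. i \<in> R \<Longrightarrow> p \<in> P \<Longrightarrow> A i p \<in> {0, 1}"
  shows "(\<Sum>p\<in>P. (\<Sum>i\<in>R. b i * A i p) * g p) = (\<Sum>i\<in>R. b i * (\<Sum>p\<in>{p\<in>P. A i p = 1}. g p))"
proof -
  have "(\<Sum>p\<in>P. (\<Sum>i\<in>R. b i * A i p) * g p) = (\<Sum>i\<in>R. \<Sum>p\<in>P. b i * (A i p * g p))"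
    by (subst sum.swap) (simp add: sum_distrib_right mult.assoc)
  also have "\<dots> = (\<Sum>i\<in>R. b i * (\<Sum>p\<in>P. A i p * g p))"
    by (simp add: sum_distrib_left)
  also have "\<dots> = (\<Sum>i\<in>R. b i * (\<Sum>p\<in>{p\<in>P. A i p = 1}. g p))"
    unfolding sum.inter_filter[OF \<open>finite P\<close>]
    using assms(2) by (intro sum.cong refl arg_cong2[where f = times]) fastforce+
  finally show ?thesis .
qed

lemma kcost_le_recovered_sum:
  assumes "finite P" "\<And>i p. i \<in> R \<Longrightarrow> p \<in> P \<Longrightarrow> A i p \<in> {0, 1}"
    and "recovery_vector A P \<delta> R b" "finite C" "C \<noteq> {}"
  shows "kcost P C \<le> (\<Sum>i\<in>R. b i * kcost {p\<in>P. A i p = 1} C)"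
proof -
  have "kcost P C \<le> (\<Sum>p\<in>P. (\<Sum>i\<in>R. b i * A i p) * dist_to p C)"
    unfolding kcost_def
    using assms(3) dist_to_nonneg[OF assms(4,5)] unfolding recovery_vector_def
    by (intro sum_mono) (metis mult_1 mult_right_mono)
  then show ?thesis
    by (simp add: sum_recovery_weighted[OF assms(1,2)] kcost_def)
qed

lemma recovered_sum_le_kcost:
  assumes "finite P" "\<And>i p. i \<in> R \<Longrightarrow> p \<in> P \<Longrightarrow> A i p \<in> {0, 1}"
    and "recovery_vector A P \<delta> R b" "finite C" "C \<noteq> {}"
  shows "(\<Sum>i\<in>R. b i * kcost {p\<in>P. A i p = 1} C) \<le> (1 + \<delta>) * kcost P C"
proof -
  have "(\<Sum>p\<in>P. (\<Sum>i\<in>R. b i * A i p) * dist_to p C) \<le> (\<Sum>p\<in>P. (1 + \<delta>) * dist_to p C)"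
    using assms(3) dist_to_nonneg[OF assms(4,5)] unfolding recovery_vector_def
    by (intro sum_mono mult_right_mono) auto
  then show ?thesis
    by (simp add: sum_recovery_weighted[OF assms(1,2)] kcost_def sum_distrib_left)
qed

theorem theorem2:
  fixes P :: "'a::euclidean_space set"
    and A :: "nat \<Rightarrow> 'a \<Rightarrow> real"
    and s t k :: nat and \<delta> :: real
    and R :: "nat set" and b :: "nat \<Rightarrow> real"
    and Y :: "nat \<Rightarrow> 'a set" and \<sigma> :: "nat \<Rightarrow> 'a \<Rightarrow> 'a"
    and Chat Cstar :: "'a set"
  assumes "finite P" and "0 < k"
    and "t < s" and "0 < \<delta>"
    and A01: "\<forall>i\<in>{1..s}. \<forall>p\<in>P. A i p \<in> {0, 1}"
    and "straggler_resilient A P s t \<delta>"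
    and "R \<subseteq> {1..s}" and "card R \<ge> s - t"
    and "recovery_vector A P \<delta> R b"
    and Yopt: "\<forall>i\<in>R. opt_kmedian k {p\<in>P. A i p = 1} (Y i)"
    and \<sigma>: "\<forall>i\<in>R. \<forall>p\<in>{p\<in>P. A i p = 1}. \<sigma> i p \<in> Y i \<and> norm (p - \<sigma> i p) = dist_to p (Y i)"
    and "opt_wkmedian k (\<Union>i\<in>R. Y i)
           (\<lambda>c. \<Sum>i\<in>{i\<in>R. c \<in> Y i}. b i * real (card (cluster (\<sigma> i) c {p\<in>P. A i p = 1})))
           Chat"
    and "opt_kmedian k P Cstar"
  shows "kcost P Chat \<le> 3 * (1 + \<delta>) * kcost P Cstar"
proof -
  have "finite R" using \<open>R \<subseteq> {1..s}\<close> finite_subset by blast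
  have A01_R: "A i p \<in> {0, 1}" if "i \<in> R" "p \<in> P" for i p
    using A01 \<open>R \<subseteq> {1..s}\<close> that by blast
  have "finite Chat" "Chat \<noteq> {}" "finite Cstar" "card Cstar = k" "Cstar \<noteq> {}"
    using \<open>opt_wkmedian k _ _ Chat\<close> \<open>opt_kmedian k P Cstar\<close> \<open>0 < k\<close>
    unfolding opt_wkmedian_def opt_kmedian_def by auto
  have "kcost P Chat \<le> (\<Sum>i\<in>R. b i * kcost {p\<in>P. A i p = 1} Chat)"
    using kcost_le_recovered_sum[OF \<open>finite P\<close> A01_R assms(9) \<open>finite Chat\<close> \<open>Chat \<noteq> {}\<close>] .
  also have "\<dots> \<le> 3 * (\<Sum>i\<in>R. b i * kcost {p\<in>P. A i p = 1} Cstar)"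
  proof (rule opt_merged_centers_3_approx[OF \<open>finite R\<close> \<open>0 < k\<close> _ _ _ _ assms(12)
        \<open>finite Cstar\<close> \<open>card Cstar = k\<close>])
    show "0 \<le> b i" if "i \<in> R" for i
      using assms(9) that unfolding recovery_vector_def by blast
  qed (use \<open>finite P\<close> Yopt \<sigma> in auto)
  also have "\<dots> \<le> 3 * ((1 + \<delta>) * kcost P Cstar)"
    using recovered_sum_le_kcost[OF \<open>finite P\<close> A01_R assms(9) \<open>finite Cstar\<close> \<open>Cstar \<noteq> {}\<close>] by simp
  finally show ?thesis by (simp only: mult.assoc)
qed

end
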